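(* Let $P$ be a program and let $\tau = \alpha \cdot \mathit{issue}(p,t)\cdot \beta\cdot \mathit{com}(p,t)$ be a minimal anomaly of $P$ such that $\mathit{issue}(p,t)$ happens before $\mathit{com}(p,t)$ through $\beta$. Then there exists an event $\mathit{issue}(p',t')$ in $\beta$ such that $(\mathit{issue}(p',t'),\mathit{com}(p,t))\in\mathsf{hb}$.
   Context: Programs: parallel compositions of processes, each a sequence of transactions (reads of shared variables into registers, writes of register expressions to shared variables, assume statements, delimited by begin and commit). Snapshot isolation (SI): a transaction reads/writes a local snapshot of the central memory taken at its begin and can commit (publishing its writes) only if no transaction committed after its begin wrote a variable it writes. Serializability: every transaction executes atomically. Traces: each transaction $t$ of process $p$ yields an issue event $\mathit{issue}(p,t)$ (begin, reads, local writes) and a commit event $\mathit{com}(p,t)$. Dependencies: $\mathsf{po}$ (program order), $\mathsf{rf}$ (write-read), $\mathsf{st}$ (store order between writes to the same variable), $\mathsf{cf}$ (conflict: a read does not see a write to the same variable that would affect it if visible), and issue-to-commit of the same transaction; $\mathsf{hb}^1$ is their union, $\mathsf{hb}$ (happens-before) its transitive closure. An anomaly of $P$ is a trace of an SI execution of $P$ that is not a trace of any serializable execution. "$a$ happens before $b$ through $\beta$" in a trace $\alpha\cdot a\cdot\beta\cdot b\cdot\gamma$ means there is a nonempty subsequence $c_1\cdots c_n$ of $\beta$ with $c_i\to_{\mathsf{hb}^1}c_{i+1}$ for all $i\in[0,n]$, $c_0=a$, $c_{n+1}=b$. A transaction is delayed in a trace if its issue happens before its commit through the events between them; an anomaly is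 minimal if it has the least number of delayed transactions among all anomalies of $P$. *)

theory Defs
  imports Main
begin

datatype ('x, 'r) instr =
    Read 'r 'x
  | Write 'x "('r \<Rightarrow> int) \<Rightarrow> int"
  | Assume "('r \<Rightarrow> int) \<Rightarrow> bool"

type_synonym ('x, 'r) txn = "('x, 'r) instr list"      (* body between begin and commit *)
type_synonym ('x, 'r) process = "('x, 'r) txn list"
type_synonym ('x, 'r) prog = "('x, 'r) process list"

fun run :: "('x \<Rightarrow> int) \<Rightarrow> ('x, 'r) instr list \<Rightarrow> ('r \<Rightarrow> int) \<Rightarrow> ('x \<rightharpoonup> int)
            \<Rightarrow> (('r \<Rightarrow> int) \<times> ('x \<rightharpoonup> int)) option" where
  "run m [] \<rho> b = Some (\<rho>, b)"
| "run m (Read r x # is) \<rho> b =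
     run m is (\<rho>(r := (case b x of Some v \<Rightarrow> v | None \<Rightarrow> m x))) b"
| "run m (Write x e # is) \<rho> b = run m is \<rho> (b(x \<mapsto> e \<rho>))"
| "run m (Assume c # is) \<rho> b = (if c \<rho> then run m is \<rho> b else None)"

text \<open>Variables written by a transaction, and variables read from the snapshot
  (reads not preceded by a local write to the same variable).\<close>
fun wvars :: "('x, 'r) instr list \<Rightarrow> 'x set" where
  "wvars [] = {}"
| "wvars (Write x e # is) = insert x (wvars is)"
| "wvars (_ # is) = wvars is"

fun xreads :: "'x set \<Rightarrow> ('x, 'r) instr list \<Rightarrow> 'x set" where
  "xreads W [] = {}"
| "xreads W (Read r x # is) = (if x \<in> W then {} else {x}) \<union> xreads W is"
| "xreads W (Write x e # is) = xreads (insert x W) is"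
| "xreads W (Assume c # is) = xreads W is"

definition ws :: "('x, 'r) prog \<Rightarrow> nat \<Rightarrow> nat \<Rightarrow> 'x set" where
  "ws P p t = wvars (P ! p ! t)"

definition rs :: "('x, 'r) prog \<Rightarrow> nat \<Rightarrow> nat \<Rightarrow> 'x set" where
  "rs P p t = xreads {} (P ! p ! t)"

text \<open>Iss p t = issue(p,t) (begin, reads, local writes); Com p t = com(p,t);
  t is the index of the transaction in process p.\<close>
datatype event = Iss nat nat | Com nat nat

fun proc :: "event \<Rightarrow> nat" where
  "proc (Iss p t) = p" | "proc (Com p t) = p"

fun txn :: "event \<Rightarrow> nat" where
  "txn (Iss p t) = t" | "txn (Com p t) = t"

record ('x, 'r) conf =
  mem  :: "'x \<Rightarrow> int"
  pcs  :: "nat \<Rightarrow> nat"                       (* next transaction of each process *)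
  regs :: "nat \<Rightarrow> 'r \<Rightarrow> int"
  pend :: "nat \<Rightarrow> (('x \<rightharpoonup> int) \<times> nat) option"
          (* issued, uncommitted transaction: local writes, commit-log length at begin *)
  clog :: "'x set list"                      (* write sets of committed txns, in commit order *)

definition init_conf :: "('x, 'r) conf" where
  "init_conf = \<lparr>mem = (\<lambda>_. 0), pcs = (\<lambda>_. 0), regs = (\<lambda>_ _. 0),
                pend = (\<lambda>_. None), clog = []\<rparr>"

inductive si_step :: "('x, 'r) prog \<Rightarrow> ('x, 'r) conf \<Rightarrow> event \<Rightarrow> ('x, 'r) conf \<Rightarrow> bool"
  for P where
  issue: "\<lbrakk> p < length P; pcs c p = t; t < length (P ! p); pend c p = None;
            run (mem c) (P ! p ! t) (regs c p) Map.empty = Some (\<rho>, b) \<rbrakk>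
          \<Longrightarrow> si_step P c (Iss p t)
                (c\<lparr>regs := (regs c)(p := \<rho>),
                   pend := (pend c)(p := Some (b, length (clog c)))\<rparr>)"
| commit: "\<lbrakk> pend c p = Some (b, k); pcs c p = t;
             \<forall>i. k \<le> i \<and> i < length (clog c) \<longrightarrow> clog c ! i \<inter> dom b = {} \<rbrakk>
          \<Longrightarrow> si_step P c (Com p t)
                (c\<lparr>mem := (\<lambda>x. case b x of Some v \<Rightarrow> v | None \<Rightarrow> mem c x),
                   pcs := (pcs c)(p := Suc t),
                   pend := (pend c)(p := None),
                   clog := clog c @ [dom b]\<rparr>)"

inductive si_exec :: "('x, 'r) prog \<Rightarrow> ('x, 'r) conf \<Rightarrow> event list \<Rightarrow> bool" for P where
  start: "si_exec P init_conf []"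
| step: "\<lbrakk> si_exec P c \<tau>; si_step P c e c' \<rbrakk> \<Longrightarrow> si_exec P c' (\<tau> @ [e])"

definition si_traces :: "('x, 'r) prog \<Rightarrow> event list set" where
  "si_traces P = {\<tau>. \<exists>c. si_exec P c \<tau>}"

text \<open>Serializable executions: every transaction executes atomically, i.e. its
  issue is immediately followed by its commit (nothing interleaves).\<close>
definition ser_traces :: "('x, 'r) prog \<Rightarrow> event list set" where
  "ser_traces P = {\<tau> \<in> si_traces P. \<forall>i p t. Suc i < length \<tau> \<longrightarrow>
                      \<tau> ! i = Iss p t \<longrightarrow> \<tau> ! Suc i = Com p t}"

definition po_rel :: "event list \<Rightarrow> (event \<times> event) set" where
  "po_rel \<tau> = {(\<tau> ! i, \<tau> ! j) | i j. i < j \<and> j < length \<tau> \<and>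
                 proc (\<tau> ! i) = proc (\<tau> ! j) \<and> txn (\<tau> ! i) \<noteq> txn (\<tau> ! j)}"

definition ito_rel :: "event list \<Rightarrow> (event \<times> event) set" where
  "ito_rel \<tau> = {(Iss p t, Com p t) | p t. Iss p t \<in> set \<tau> \<and> Com p t \<in> set \<tau>}"

definition rf_rel :: "('x, 'r) prog \<Rightarrow> event list \<Rightarrow> ('x \<times> event \<times> event) set" where
  "rf_rel P \<tau> = {(x, \<tau> ! i, \<tau> ! j) | x i j p t p' t'. i < j \<and> j < length \<tau> \<and>
      \<tau> ! i = Com p t \<and> \<tau> ! j = Iss p' t' \<and> x \<in> ws P p t \<and> x \<in> rs P p' t' \<and>
      (\<forall>k q s. i < k \<and> k < j \<and> \<tau> ! k = Com q s \<longrightarrow> x \<notin> ws P q s)}"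

definition st_rel :: "('x, 'r) prog \<Rightarrow> event list \<Rightarrow> ('x \<times> event \<times> event) set" where
  "st_rel P \<tau> = {(x, \<tau> ! i, \<tau> ! j) | x i j p t p' t'. i < j \<and> j < length \<tau> \<and>
      \<tau> ! i = Com p t \<and> \<tau> ! j = Com p' t' \<and> x \<in> ws P p t \<and> x \<in> ws P p' t'}"

definition cf_rel :: "('x, 'r) prog \<Rightarrow> event list \<Rightarrow> ('x \<times> event \<times> event) set" where
  "cf_rel P \<tau> = {(x, \<tau> ! i, \<tau> ! j) | x i j p t p' t'. i < j \<and> j < length \<tau> \<and>
      \<tau> ! i = Iss p t \<and> \<tau> ! j = Com p' t' \<and> (p, t) \<noteq> (p', t') \<and>
      x \<in> rs P p t \<and> x \<in> ws P p' t'}"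

definition hb1 :: "('x, 'r) prog \<Rightarrow> event list \<Rightarrow> (event \<times> event) set" where
  "hb1 P \<tau> = po_rel \<tau> \<union> ito_rel \<tau> \<union>
     {(e, e'). \<exists>x. (x, e, e') \<in> rf_rel P \<tau> \<union> st_rel P \<tau> \<union> cf_rel P \<tau>}"

definition hb :: "('x, 'r) prog \<Rightarrow> event list \<Rightarrow> (event \<times> event) set" where
  "hb P \<tau> = (hb1 P \<tau>)\<^sup>+"

text \<open>The trace abstracted from the interleaving order: events and dependencies.\<close>
definition trace_of :: "('x, 'r) prog \<Rightarrow> event list \<Rightarrow>
    event set \<times> (event \<times> event) set \<times> ('x \<times> event \<times> event) set
      \<times> ('x \<times> event \<times> event) set \<times> ('x \<times> event \<times> event) set" where
  "trace_of P \<tau> = (set \<tau>, po_rel \<tau>, rf_rel P \<tau>, st_rel P \<tau>, cf_rel P \<tau>)"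

definition anomaly :: "('x, 'r) prog \<Rightarrow> event list \<Rightarrow> bool" where
  "anomaly P \<tau> \<longleftrightarrow> \<tau> \<in> si_traces P \<and> (\<forall>\<sigma> \<in> ser_traces P. trace_of P \<sigma> \<noteq> trace_of P \<tau>)"

definition hb_through :: "('x, 'r) prog \<Rightarrow> event list \<Rightarrow> nat \<Rightarrow> nat \<Rightarrow> bool" where
  "hb_through P \<tau> i j \<longleftrightarrow> i < j \<and> j < length \<tau> \<and>
     (\<exists>ks. ks \<noteq> [] \<and> sorted_wrt (<) ks \<and> (\<forall>k \<in> set ks. i < k \<and> k < j) \<and>
        (let cs = i # ks @ [j] in
           \<forall>m. Suc m < length cs \<longrightarrow> (\<tau> ! (cs ! m), \<tau> ! (cs ! Suc m)) \<in> hb1 P \<tau>))"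

definition delayed :: "('x, 'r) prog \<Rightarrow> event list \<Rightarrow> nat \<times> nat \<Rightarrow> bool" where
  "delayed P \<tau> pt \<longleftrightarrow> (\<exists>i j. \<tau> ! i = Iss (fst pt) (snd pt) \<and> \<tau> ! j = Com (fst pt) (snd pt)
                            \<and> hb_through P \<tau> i j)"

definition num_delayed :: "('x, 'r) prog \<Rightarrow> event list \<Rightarrow> nat" where
  "num_delayed P \<tau> = card {pt. delayed P \<tau> pt}"

definition minimal_anomaly :: "('x, 'r) prog \<Rightarrow> event list \<Rightarrow> bool" where
  "minimal_anomaly P \<tau> \<longleftrightarrow> anomaly P \<tau> \<and>
     (\<forall>\<sigma>. anomaly P \<sigma> \<longrightarrow> num_delayed P \<tau> \<le> num_delayed P \<sigma>)"

end

theory Submission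
  imports Defs
begin

text \<open>In the chain witnessing that issue(p,t) happens before com(p,t) through \<beta>, the last
  intermediate event e precedes com(p,t) by a single dependency step.  If e were a commit, it
  would be the commit of a transaction of another process that committed while t was pending;
  snapshot isolation lets t commit only if that transaction writes no variable t writes, and
  without a common variable or a common process no dependency links two commits.  Hence e is an
  issue event.\<close>

lemma run_Some_dom: "run m is \<rho> b = Some (\<rho>', b') \<Longrightarrow> dom b' = dom b \<union> wvars is"
  by (induction m "is" \<rho> b rule: run.induct) (auto split: if_splits)

definition pending_wf :: "('x, 'r) prog \<Rightarrow> ('x, 'r) conf \<Rightarrow> bool" where
  "pending_wf P c \<longleftrightarrow>
     (\<forall>q b k. pend c q = Some (b, k) \<longrightarrow> dom b = ws P q (pcs c q) \<and> k \<le> length (clog c))"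

lemma pending_wf_init: "pending_wf P init_conf"
  by (simp add: pending_wf_def init_conf_def)

lemma pending_wf_step: "si_step P c e c' \<Longrightarrow> pending_wf P c \<Longrightarrow> pending_wf P c'"
proof (induction rule: si_step.induct)
  case (issue p c t \<rho> b)
  then show ?case using run_Some_dom[OF issue(5)] by (auto simp: pending_wf_def ws_def)
next
  case commit
  then show ?case by (fastforce simp: pending_wf_def)
qed

lemma si_step_pcs_mono: "si_step P c e c' \<Longrightarrow> pcs c q \<le> pcs c' q"
  by (induction rule: si_step.induct) auto

inductive si_steps :: "('x, 'r) prog \<Rightarrow> ('x, 'r) conf \<Rightarrow> event list \<Rightarrow> ('x, 'r) conf \<Rightarrow> bool"
  for P where
  refl: "si_steps P c [] c"
| snoc: "\<lbrakk> si_steps P c \<sigma> c'; si_step P c' e c'' \<rbrakk> \<Longrightarrow> si_steps P c (\<sigma> @ [e]) c''"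

lemma si_exec_pending_wf: "si_exec P c \<tau> \<Longrightarrow> pending_wf P c"
  by (induction rule: si_exec.induct) (auto intro: pending_wf_init pending_wf_step)

lemma si_steps_pending_wf: "si_steps P c \<sigma> c' \<Longrightarrow> pending_wf P c \<Longrightarrow> pending_wf P c'"
  by (induction rule: si_steps.induct) (auto intro: pending_wf_step)

lemma si_steps_pcs_mono: "si_steps P c \<sigma> c' \<Longrightarrow> pcs c q \<le> pcs c' q"
  by (induction rule: si_steps.induct) (auto dest: si_step_pcs_mono[of _ _ _ _ q])

lemma si_exec_append_split:
  "si_exec P c (\<tau>\<^sub>1 @ \<tau>\<^sub>2) \<Longrightarrow> \<exists>c\<^sub>1. si_exec P c\<^sub>1 \<tau>\<^sub>1 \<and> si_steps P c\<^sub>1 \<tau>\<^sub>2 c"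
proof (induction \<tau>\<^sub>2 arbitrary: c rule: rev_induct)
  case Nil
  then show ?case by (auto intro: si_steps.refl)
next
  case (snoc e \<tau>\<^sub>2)
  from snoc.prems obtain c' where "si_exec P c' (\<tau>\<^sub>1 @ \<tau>\<^sub>2)" "si_step P c' e c"
    by (cases rule: si_exec.cases) auto
  with snoc.IH show ?case by (meson si_steps.snoc)
qed

lemma si_steps_pending_unchanged:
  assumes "si_steps P c \<sigma> c'" "pending_wf P c" "pend c p = Some (b, k)"
    and "pcs c p = t" "pcs c' p = t"
  shows "pend c' p = Some (b, k) \<and>
    (\<forall>q s. Com q s \<in> set \<sigma> \<longrightarrow> q \<noteq> p \<and> ws P q s \<in> set (drop k (clog c')))"
  using assms
proof (induction rule: si_steps.induct)
  case refl
  then show ?case by simp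
next
  case (snoc c \<sigma> c' e c'')
  have pcs': "pcs c' p = t"
    using si_steps_pcs_mono[OF snoc.hyps(1), of p] si_step_pcs_mono[OF snoc.hyps(2), of p] snoc.prems
    by simp
  with snoc.IH snoc.prems have pend': "pend c' p = Some (b, k)"
    and logged: "\<forall>q s. Com q s \<in> set \<sigma> \<longrightarrow> q \<noteq> p \<and> ws P q s \<in> set (drop k (clog c'))"
    by auto
  have wf': "pending_wf P c'" using si_steps_pending_wf[OF snoc.hyps(1) snoc.prems(1)] .
  from snoc.hyps(2) show ?case
  proof (cases rule: si_step.cases)
    case (issue q s \<rho> b')
    with pend' have "q \<noteq> p" by auto
    with issue pend' logged show ?thesis by auto
  next
    case (commit q b' k' s)
    have "q \<noteq> p" using commit snoc.prems pcs' by auto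
    moreover have "dom b' = ws P q s" "k \<le> length (clog c')"
      using wf' commit pend' unfolding pending_wf_def by auto
    ultimately show ?thesis using commit pend' logged by auto
  qed
qed

lemma si_trace_concurrent_commit_disjoint:
  assumes "\<tau> \<in> si_traces P" "\<tau> = \<alpha> @ [Iss p t] @ \<beta> @ [Com p t]" "Com q s \<in> set \<beta>"
  shows "q \<noteq> p \<and> ws P q s \<inter> ws P p t = {}"
proof -
  obtain c where "si_exec P c ((\<alpha> @ [Iss p t]) @ (\<beta> @ [Com p t]))"
    using assms(1,2) by (auto simp: si_traces_def)
  then obtain c\<^sub>1 where exec\<^sub>1: "si_exec P c\<^sub>1 (\<alpha> @ [Iss p t])"
    and steps: "si_steps P c\<^sub>1 (\<beta> @ [Com p t]) c"
    using si_exec_append_split by blast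
  from exec\<^sub>1 obtain c\<^sub>0 where "si_step P c\<^sub>0 (Iss p t) c\<^sub>1"
    by (cases rule: si_exec.cases) auto
  then obtain b k where pend\<^sub>1: "pend c\<^sub>1 p = Some (b, k)" and pcs\<^sub>1: "pcs c\<^sub>1 p = t"
    by (cases rule: si_step.cases) auto
  have wf\<^sub>1: "pending_wf P c\<^sub>1" using si_exec_pending_wf[OF exec\<^sub>1] .
  then have dom_b: "dom b = ws P p t" using pend\<^sub>1 pcs\<^sub>1 unfolding pending_wf_def by auto
  from steps obtain c\<^sub>2 where steps\<^sub>2: "si_steps P c\<^sub>1 \<beta> c\<^sub>2"
    and final: "si_step P c\<^sub>2 (Com p t) c"
    by (cases rule: si_steps.cases) auto
  from final obtain b\<^sub>2 k\<^sub>2 where pend\<^sub>2: "pend c\<^sub>2 p = Some (b\<^sub>2, k\<^sub>2)" and pcs\<^sub>2: "pcs c\<^sub>2 p = t"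
    and check: "\<forall>i. k\<^sub>2 \<le> i \<and> i < length (clog c\<^sub>2) \<longrightarrow> clog c\<^sub>2 ! i \<inter> dom b\<^sub>2 = {}"
    by (cases rule: si_step.cases) auto
  from si_steps_pending_unchanged[OF steps\<^sub>2 wf\<^sub>1 pend\<^sub>1 pcs\<^sub>1 pcs\<^sub>2] pend\<^sub>2 assms(3)
  have same: "b\<^sub>2 = b" "k\<^sub>2 = k" "q \<noteq> p"
    and logged: "ws P q s \<in> set (drop k (clog c\<^sub>2))"
    by auto
  from logged obtain i where "k \<le> i" "i < length (clog c\<^sub>2)" "clog c\<^sub>2 ! i = ws P q s"
    by (auto simp: in_set_conv_nth) (metis le_add1 less_diff_conv add.commute)
  with same check dom_b show ?thesis by auto
qed

lemma hb1_Com_ComD: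
  assumes "(Com q s, Com p t) \<in> hb1 P \<tau>"
  shows "q = p \<or> ws P q s \<inter> ws P p t \<noteq> {}"
  using assms unfolding hb1_def po_rel_def ito_rel_def rf_rel_def st_rel_def cf_rel_def
  by auto (metis proc.simps(2))

lemma hb_through_last_step:
  assumes "hb_through P \<tau> i j"
  obtains k where "i < k" "k < j" "(\<tau> ! k, \<tau> ! j) \<in> hb1 P \<tau>"
proof -
  obtain ks where ks: "ks \<noteq> []" "\<forall>k \<in> set ks. i < k \<and> k < j"
    and chain: "\<forall>m. Suc m < length (i # ks @ [j]) \<longrightarrow>
       (\<tau> ! ((i # ks @ [j]) ! m), \<tau> ! ((i # ks @ [j]) ! Suc m)) \<in> hb1 P \<tau>"
    using assms unfolding hb_through_def Let_def by blast
  have "(i # ks @ [j]) ! length ks = last ks" "(i # ks @ [j]) ! Suc (length ks) = j"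
    using ks(1) by (auto simp: nth_append last_conv_nth nth_Cons split: nat.split)
  with chain have "(\<tau> ! last ks, \<tau> ! j) \<in> hb1 P \<tau>"
    by (metis length_Cons length_append_singleton lessI)
  moreover have "i < last ks" "last ks < j" using ks by auto
  ultimately show thesis using that by blast
qed

theorem lemma4:
  fixes P :: "('x, 'r) prog" and \<tau> \<alpha> \<beta> :: "event list" and p t :: nat
  assumes "minimal_anomaly P \<tau>"
    and "\<tau> = \<alpha> @ [Iss p t] @ \<beta> @ [Com p t]"
    and "hb_through P \<tau> (length \<alpha>) (length \<alpha> + length \<beta> + 1)"
  shows "\<exists>p' t'. Iss p' t' \<in> set \<beta> \<and> (Iss p' t', Com p t) \<in> hb P \<tau>"
proof -
  have si: "\<tau> \<in> si_traces P" using assms(1) by (simp add: minimal_anomaly_def anomaly_def)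
  obtain k where k: "length \<alpha> < k" "k < length \<alpha> + length \<beta> + 1"
    and step: "(\<tau> ! k, \<tau> ! (length \<alpha> + length \<beta> + 1)) \<in> hb1 P \<tau>"
    using hb_through_last_step[OF assms(3)] by blast
  have last: "\<tau> ! (length \<alpha> + length \<beta> + 1) = Com p t" using assms(2) by (simp add: nth_append)
  have in_\<beta>: "\<tau> ! k \<in> set \<beta>"
    using k assms(2) by (auto simp: nth_append nth_Cons split: nat.split)
  show ?thesis
  proof (cases "\<tau> ! k")
    case (Iss p' t')
    then show ?thesis using step last in_\<beta> by (auto simp: hb_def)
  next
    case (Com q s)
    then show ?thesis
      using step last in_\<beta> hb1_Com_ComD si_trace_concurrent_commit_disjoint[OF si assms(2)]
      by metis
  qed
qed

end
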